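(* Let $(M,\Sigma)$ be a measurable space, $r\ge1$, and $\mu_1,\dots,\mu_r$ non-atomic countably additive finite measures on $\Sigma$; put $\mu=\frac1r\sum_{i=1}^r\mu_i$. For $k\ge1$ let $t(k)=k\bmod r$ if this is nonzero and $t(k)=r$ otherwise. Let $(H_k)_{k\ge1}$ be a sequence of measurable sets such that for every $k$: $H_k\subseteq M\setminus\bigcup_{i=1}^{k-1}H_i$, $H_k$ admits a strong solution (a partition $H_k=F_1\sqcup\dots\sqcup F_r$ with $\mu_i(F_i)\ge\mu_i(F_j)$ for all $i,j$), and $\mu_{t(k)}(H_k)\ge 2^{-(r-1)}\mu_{t(k)}\bigl(M\setminus\bigcup_{i=1}^{k-1}H_i\bigr)$. For $s\ge0$ let $M_s=M\setminus\bigcup_{i=1}^{sr}H_i$. Then for every $s\ge0$, $$\mu(M_s)\le\Bigl(\frac{2^{r-1}-1}{2^{r-1}}\Bigr)^{s}\mu(M).$$ *)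

theory Defs
  imports "HOL-Analysis.Analysis"
begin

definition nonatomic :: "'a measure \<Rightarrow> bool" where
  "nonatomic m \<longleftrightarrow> (\<forall>A\<in>sets m. emeasure m A > 0 \<longrightarrow>
      (\<exists>B\<in>sets m. B \<subseteq> A \<and> 0 < emeasure m B \<and> emeasure m B < emeasure m A))"

definition strong_solution :: "(nat \<Rightarrow> 'a measure) \<Rightarrow> nat \<Rightarrow> 'a set \<Rightarrow> bool" where
  "strong_solution mu r H \<longleftrightarrow> (\<exists>F :: nat \<Rightarrow> 'a set.
      (\<forall>i\<in>{1..r}. F i \<in> sets (mu i)) \<and>
      (\<Union>i\<in>{1..r}. F i) = H \<and>
      disjoint_family_on F {1..r} \<and>
      (\<forall>i\<in>{1..r}. \<forall>j\<in>{1..r}. measure (mu i) (F j) \<le> measure (mu i) (F i)))"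

definition tidx :: "nat \<Rightarrow> nat \<Rightarrow> nat" where
  "tidx r k = (if k mod r \<noteq> 0 then k mod r else r)"

definition avg_measure :: "(nat \<Rightarrow> 'a measure) \<Rightarrow> nat \<Rightarrow> 'a set \<Rightarrow> real" where
  "avg_measure mu r A = (1 / real r) * (\<Sum>i=1..r. measure (mu i) A)"

end

theory Submission
  imports Defs
begin

text \<open>When \<open>k \<equiv> i (mod r)\<close>, the set \<open>H k\<close> takes away at least the fraction \<open>2 ^ -(r - 1)\<close>
of the \<open>\<mu>\<^sub>i\<close>-measure of what is still uncovered, and the uncovered set only shrinks.
Hence every block of \<open>r\<close> consecutive steps multiplies the \<open>\<mu>\<^sub>i\<close>-measure of the uncovered
set by at most \<open>1 - 2 ^ -(r - 1)\<close>, for each \<open>i\<close> separately, and averaging over \<open>i\<close> gives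
the bound.\<close>

definition residual :: "'a set \<Rightarrow> (nat \<Rightarrow> 'a set) \<Rightarrow> nat \<Rightarrow> 'a set" where
  "residual X H k = X - (\<Union>i\<in>{1..k}. H i)"

lemma residual_0 [simp]: "residual X H 0 = X"
  by (simp add: residual_def)

lemma residual_Suc: "residual X H (Suc k) = residual X H k - H (Suc k)"
  by (auto simp: residual_def atLeastAtMostSuc_conv)

lemma residual_antimono: "j \<le> k \<Longrightarrow> residual X H k \<subseteq> residual X H j"
  by (auto simp: residual_def)

lemma residual_in_sets:
  assumes "X \<in> sets M" and "\<And>k. 1 \<le> k \<Longrightarrow> H k \<in> sets M"
  shows "residual X H k \<in> sets M"
  unfolding residual_def using assms by (intro sets.Diff sets.finite_UN) auto

lemma (in finite_measure) measure_Diff_le_fraction: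
  assumes "A \<in> sets M" "B \<in> sets M" "B \<subseteq> A" "a * measure M A \<le> measure M B"
  shows "measure M (A - B) \<le> (1 - a) * measure M A"
  using finite_measure_Diff[OF assms(1-3)] assms(4) by (simp add: left_diff_distrib)

lemma (in finite_measure) measure_residual_decay:
  assumes X: "X \<in> sets M" and H: "\<And>k. 1 \<le> k \<Longrightarrow> H k \<in> sets M"
    and sub: "H (Suc j) \<subseteq> residual X H j"
    and big: "a * measure M (residual X H j) \<le> measure M (H (Suc j))"
    and "a \<le> 1" "n \<le> j" "j < m"
  shows "measure M (residual X H m) \<le> (1 - a) * measure M (residual X H n)"
proof -
  have res: "residual X H k \<in> sets M" for k
    using X H by (rule residual_in_sets)
  have "measure M (residual X H m) \<le> measure M (residual X H (Suc j))"
    using \<open>j < m\<close> res by (intro finite_measure_mono residual_antimono) auto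
  also have "\<dots> \<le> (1 - a) * measure M (residual X H j)"
    unfolding residual_Suc using res H sub big by (intro measure_Diff_le_fraction) auto
  also have "\<dots> \<le> (1 - a) * measure M (residual X H n)"
    using \<open>a \<le> 1\<close> \<open>n \<le> j\<close> res
    by (intro mult_left_mono finite_measure_mono residual_antimono) auto
  finally show ?thesis .
qed

lemma geometric_decay_bound:
  fixes f :: "nat \<Rightarrow> real"
  assumes "0 \<le> c" and "\<And>t. f (Suc t) \<le> c * f t"
  shows "f t \<le> c ^ t * f 0"
proof (induction t)
  case (Suc t)
  have "f (Suc t) \<le> c * f t" by (fact assms(2))
  also have "\<dots> \<le> c * (c ^ t * f 0)" using Suc \<open>0 \<le> c\<close> by (rule mult_left_mono)
  finally show ?case by simp
qed simp

lemma tidx_block: "i \<in> {1..r} \<Longrightarrow> tidx r (t * r + i) = i"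
  by (cases "i = r") (auto simp: tidx_def)

lemma avg_measure_le_scaled:
  assumes "\<And>i. i \<in> {1..r} \<Longrightarrow> measure (mu i) A \<le> c * measure (mu i) B"
  shows "avg_measure mu r A \<le> c * avg_measure mu r B"
proof -
  have "(\<Sum>i=1..r. measure (mu i) A) \<le> c * (\<Sum>i=1..r. measure (mu i) B)"
    unfolding sum_distrib_left using assms by (rule sum_mono)
  then show ?thesis
    unfolding avg_measure_def by (simp add: divide_right_mono)
qed

theorem corollary2:
  fixes N :: "'a measure" and mu :: "nat \<Rightarrow> 'a measure" and r :: nat
    and H :: "nat \<Rightarrow> 'a set"
  assumes r: "r \<ge> 1"
    and sets_mu: "\<And>i. i \<in> {1..r} \<Longrightarrow> sets (mu i) = sets N"
    and fin: "\<And>i. i \<in> {1..r} \<Longrightarrow> finite_measure (mu i)"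
    and nonat: "\<And>i. i \<in> {1..r} \<Longrightarrow> nonatomic (mu i)"
    and H_meas: "\<And>k. k \<ge> 1 \<Longrightarrow> H k \<in> sets N"
    and H_sub: "\<And>k. k \<ge> 1 \<Longrightarrow> H k \<subseteq> space N - (\<Union>i\<in>{1..<k}. H i)"
    and H_strong: "\<And>k. k \<ge> 1 \<Longrightarrow> strong_solution mu r (H k)"
    and H_big: "\<And>k. k \<ge> 1 \<Longrightarrow>
        measure (mu (tidx r k)) (H k) \<ge>
          (1 / 2 ^ (r - 1)) * measure (mu (tidx r k)) (space N - (\<Union>i\<in>{1..<k}. H i))"
  shows "\<forall>s::nat. avg_measure mu r (space N - (\<Union>i\<in>{1..s*r}. H i))
           \<le> ((2 ^ (r - 1) - 1) / 2 ^ (r - 1)) ^ s * avg_measure mu r (space N)"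
proof
  fix s :: nat
  define a :: real where "a = 1 / 2 ^ (r - 1)"
  have a_le_1: "a \<le> 1" and c_eq: "(2 ^ (r - 1) - 1) / 2 ^ (r - 1) = 1 - a"
    unfolding a_def by (auto simp: field_simps)
  have "measure (mu i) (residual (space N) H (s * r)) \<le> (1 - a) ^ s * measure (mu i) (space N)"
    if i: "i \<in> {1..r}" for i
  proof (rule geometric_decay_bound[where f = "\<lambda>t. measure (mu i) (residual (space N) H (t * r))", simplified])
    interpret finite_measure "mu i" by (rule fin[OF i])
    fix t
    define j where "j = t * r + i - 1"
    have Suc_j: "Suc j = t * r + i" using i by (simp add: j_def)
    show "measure (mu i) (residual (space N) H (r + t * r))
        \<le> (1 - a) * measure (mu i) (residual (space N) H (t * r))"
    proof (rule measure_residual_decay[where j = j])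
      show "H (Suc j) \<subseteq> residual (space N) H j"
        using H_sub[of "Suc j"] by (simp add: residual_def atLeastLessThanSuc_atLeastAtMost)
      show "a * measure (mu i) (residual (space N) H j) \<le> measure (mu i) (H (Suc j))"
        using H_big[of "Suc j"] tidx_block[OF i, of t]
        by (simp add: Suc_j [symmetric] a_def residual_def atLeastLessThanSuc_atLeastAtMost)
    qed (use i sets_mu[OF i] H_meas a_le_1 in \<open>auto simp: j_def\<close>)
  qed (use a_le_1 in simp)
  then have "avg_measure mu r (residual (space N) H (s * r)) \<le> (1 - a) ^ s * avg_measure mu r (space N)"
    by (rule avg_measure_le_scaled)
  then show "avg_measure mu r (space N - (\<Union>i\<in>{1..s*r}. H i))
           \<le> ((2 ^ (r - 1) - 1) / 2 ^ (r - 1)) ^ s * avg_measure mu r (space N)"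
    unfolding c_eq residual_def .
qed

end
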